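(* Let $u\in S$ and assume $\hat\sigma(u)>0$. Then there exists $\tau_0>0$ such that $\lambda(u+\tau\hat d(u))>\lambda(u)$ for all $\tau\in(0,\tau_0)$.
   Context: $T,G:\mathbb{R}^n\to\mathbb{R}^n$ are continuously differentiable; $S\subset\mathbb{R}^n$ is open with $\langle G(u),\psi\rangle>0$ for all $u\in S$ and all nonzero $\psi$ with nonnegative entries. For $u\in S$: $f_i(u)=T_i(u)/G_i(u)$, $\lambda(u)=\min_i f_i(u)$, $N(u)=\{i:f_i(u)=\lambda(u)\}=\{i_1<\dots<i_N\}$, $\mathcal{A}_{N(u)}(u)$ is the $n\times N$ matrix with columns $\nabla f_{i_1}(u),\dots,\nabla f_{i_N}(u)$. Let $\hat\alpha(u)$ be a minimizer of $\|\mathcal{A}_{N(u)}(u)\alpha\|^2$ over $\{\alpha\in\mathbb{R}^N:\alpha_k\ge0,\sum_k\alpha_k=1\}$, $\hat\sigma(u)=\|\mathcal{A}_{N(u)}(u)\hat\alpha(u)\|$, and, when $\hat\sigma(u)>0$, $\hat d(u)=\mathcal{A}_{N(u)}(u)\hat\alpha(u)/\|\mathcal{A}_{N(u)}(u)\hat\alpha(u)\|$. *)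

theory Defs
  imports "HOL-Analysis.Analysis"
begin

definition cont_diff :: "(real^'n \<Rightarrow> real^'n) \<Rightarrow> bool" where
  "cont_diff F \<longleftrightarrow> (\<exists>F'. (\<forall>x. (F has_derivative blinfun_apply (F' x)) (at x))
                        \<and> continuous_on UNIV F')"

definition grad :: "(real^'n \<Rightarrow> real) \<Rightarrow> real^'n \<Rightarrow> real^'n" where
  "grad f u = (\<chi> j. frechet_derivative f (at u) (axis j 1))"

definition fval :: "(real^'n \<Rightarrow> real^'n) \<Rightarrow> (real^'n \<Rightarrow> real^'n) \<Rightarrow> 'n \<Rightarrow> real^'n \<Rightarrow> real" where
  "fval T G i u = T u $ i / G u $ i"

definition lam :: "(real^'n \<Rightarrow> real^'n) \<Rightarrow> (real^'n \<Rightarrow> real^'n) \<Rightarrow> real^'n \<Rightarrow> real" where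
  "lam T G u = Min (range (\<lambda>i. fval T G i u))"

definition Nset :: "(real^'n \<Rightarrow> real^'n) \<Rightarrow> (real^'n \<Rightarrow> real^'n) \<Rightarrow> real^'n \<Rightarrow> 'n set" where
  "Nset T G u = {i. fval T G i u = lam T G u}"

definition Acomb :: "(real^'n \<Rightarrow> real^'n) \<Rightarrow> (real^'n \<Rightarrow> real^'n) \<Rightarrow> real^'n \<Rightarrow> ('n \<Rightarrow> real) \<Rightarrow> real^'n" where
  "Acomb T G u \<alpha> = (\<Sum>i\<in>Nset T G u. \<alpha> i *\<^sub>R grad (fval T G i) u)"

end

theory Submission
  imports Defs
begin

text \<open>Along the ray \<open>u + \<tau> d\<close> each quotient \<open>f\<^sub>i = T\<^sub>i / G\<^sub>i\<close> has derivative
  \<open>\<nabla>f\<^sub>i(u) \<bullet> d\<close> at \<open>\<tau> = 0\<close>. For an active index this is positive: the first-order optimality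
  condition of the min-norm convex combination \<open>v = A\<alpha>\<close> gives \<open>\<nabla>f\<^sub>i(u) \<bullet> v \<ge> v \<bullet> v > 0\<close>.
  So every active \<open>f\<^sub>i\<close> rises above \<open>\<lambda>(u)\<close> immediately, every inactive one stays above it by
  continuity, and since there are finitely many indices their minimum increases.\<close>

lemma linear_eq_inner_basis_images:
  fixes D :: "real^'n \<Rightarrow> real"
  assumes "linear D"
  shows "D d = (\<chi> j. D (axis j 1)) \<bullet> d"
proof -
  have "d = (\<Sum>j\<in>UNIV. d$j *\<^sub>R axis j 1)"
    by (simp add: vec_eq_iff axis_def if_distrib cong: if_cong)
  then have "D d = D (\<Sum>j\<in>UNIV. d$j *\<^sub>R axis j 1)"
    by simp
  also have "\<dots> = (\<Sum>j\<in>UNIV. d$j * D (axis j 1))"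
    by (simp add: linear_sum[OF assms] linear_scale[OF assms])
  finally show ?thesis by (simp add: inner_vec_def mult.commute)
qed

lemma has_real_derivative_along_line_grad:
  assumes "f differentiable (at u)"
  shows "((\<lambda>\<tau>. f (u + \<tau> *\<^sub>R d)) has_real_derivative grad f u \<bullet> d) (at 0)"
proof -
  define D where "D = frechet_derivative f (at u)"
  have D: "(f has_derivative D) (at u)"
    using assms unfolding D_def frechet_derivative_works .
  have lin: "linear D" using D has_derivative_linear by blast
  have line: "((\<lambda>\<tau>::real. u + \<tau> *\<^sub>R d) has_derivative (\<lambda>h. h *\<^sub>R d)) (at 0)"
    by (auto intro!: derivative_eq_intros)
  have "((\<lambda>\<tau>. f (u + \<tau> *\<^sub>R d)) has_derivative (\<lambda>h. D (h *\<^sub>R d))) (at 0)"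
    using has_derivative_compose[OF line, of f D] D by simp
  moreover have "(\<lambda>h. D (h *\<^sub>R d)) = (*) (grad f u \<bullet> d)"
    using linear_scale[OF lin] linear_eq_inner_basis_images[OF lin, of d]
    by (auto simp: fun_eq_iff grad_def D_def)
  ultimately show ?thesis unfolding has_field_derivative_def by simp
qed

lemma fval_differentiable:
  assumes "T differentiable (at u)" and "G differentiable (at u)" and "G u $ i \<noteq> 0"
  shows "fval T G i differentiable (at u)"
proof -
  have "(\<lambda>x. x $ i) differentiable (at (T u))" "(\<lambda>x. x $ i) differentiable (at (G u))"
    by (simp_all add: bounded_linear_imp_differentiable bounded_linear_vec_nth)
  then have "(\<lambda>x. T x $ i) differentiable (at u)" "(\<lambda>x. G x $ i) differentiable (at u)"
    using differentiable_chain_at[OF assms(1)] differentiable_chain_at[OF assms(2)]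
    by (simp_all add: o_def)
  then show ?thesis
    using assms(3) unfolding fval_def by (auto intro: differentiable_divide)
qed

lemma vec_nth_pos_if_inner_pos_on_orthant:
  fixes x :: "real^'n"
  assumes "\<forall>\<psi>::real^'n. (\<forall>j. \<psi> $ j \<ge> 0) \<and> \<psi> \<noteq> 0 \<longrightarrow> x \<bullet> \<psi> > 0"
  shows "x $ i > 0"
proof -
  have "(\<forall>j. axis i (1::real) $ j \<ge> 0) \<and> axis i (1::real) \<noteq> 0"
    by (auto simp: axis_def vec_eq_iff)
  then show ?thesis using assms by (fastforce simp: inner_axis)
qed

text \<open>If \<open>\<alpha>\<close> minimises \<open>\<parallel>\<Sum>\<^sub>j \<beta>\<^sub>j g\<^sub>j\<parallel>\<close> over the simplex, moving a small step \<open>t\<close> towards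
  the vertex \<open>i\<close> changes the squared norm by \<open>2t (g\<^sub>i - v) \<bullet> v + O(t\<^sup>2)\<close>, which must be \<open>\<ge> 0\<close>.\<close>
lemma min_norm_combination_inner_le:
  fixes g :: "'i \<Rightarrow> 'a::real_inner"
  assumes fin: "finite N" and iN: "i \<in> N"
    and a0: "\<forall>j\<in>N. \<alpha> j \<ge> 0" and a1: "(\<Sum>j\<in>N. \<alpha> j) = 1"
    and opt: "\<forall>\<beta>. (\<forall>j\<in>N. \<beta> j \<ge> 0) \<and> (\<Sum>j\<in>N. \<beta> j) = 1
              \<longrightarrow> (norm (\<Sum>j\<in>N. \<alpha> j *\<^sub>R g j))\<^sup>2 \<le> (norm (\<Sum>j\<in>N. \<beta> j *\<^sub>R g j))\<^sup>2"
  shows "(\<Sum>j\<in>N. \<alpha> j *\<^sub>R g j) \<bullet> (\<Sum>j\<in>N. \<alpha> j *\<^sub>R g j)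
         \<le> g i \<bullet> (\<Sum>j\<in>N. \<alpha> j *\<^sub>R g j)"
proof (rule ccontr)
  define v where "v = (\<Sum>j\<in>N. \<alpha> j *\<^sub>R g j)"
  define w where "w = g i - v"
  define c where "c = w \<bullet> v"
  define K where "K = w \<bullet> w"
  assume "\<not> ?thesis"
  then have c: "c < 0" unfolding c_def w_def v_def by (simp add: inner_diff_left)
  then have K: "K > 0" unfolding c_def K_def by (metis inner_gt_zero_iff inner_zero_left)
  define t where "t = min 1 (-c/K)"
  have t0: "t > 0" and t1: "t \<le> 1" using c K unfolding t_def by (simp_all add: divide_neg_pos)
  have tK: "t * K \<le> -c" unfolding t_def using K
    by (metis min.cobounded2 pos_le_divide_eq)
  define \<beta> where "\<beta> = (\<lambda>j. (1-t) * \<alpha> j + t * (if j = i then 1 else 0))"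
  have b0: "\<forall>j\<in>N. \<beta> j \<ge> 0" using a0 t0 t1 unfolding \<beta>_def by auto
  have b1: "(\<Sum>j\<in>N. \<beta> j) = 1" unfolding \<beta>_def
    using fin iN a1 by (simp add: sum.distrib sum_distrib_left[symmetric])
  have "\<beta> j *\<^sub>R g j = (1-t) *\<^sub>R (\<alpha> j *\<^sub>R g j) + (if j = i then t *\<^sub>R g i else 0)" for j
    unfolding \<beta>_def by (simp add: scaleR_add_left)
  then have "(\<Sum>j\<in>N. \<beta> j *\<^sub>R g j)
        = (\<Sum>j\<in>N. (1-t) *\<^sub>R (\<alpha> j *\<^sub>R g j)) + (\<Sum>j\<in>N. if j = i then t *\<^sub>R g i else 0)"
    by (simp add: sum.distrib)
  also have "\<dots> = (1-t) *\<^sub>R v + t *\<^sub>R g i"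
    using fin iN unfolding v_def by (simp add: scaleR_sum_right)
  also have "\<dots> = v + t *\<^sub>R w" unfolding w_def by (simp add: algebra_simps)
  finally have "(norm v)\<^sup>2 \<le> (norm (v + t *\<^sub>R w))\<^sup>2"
    using opt b0 b1 unfolding v_def by metis
  then have "v \<bullet> v \<le> v \<bullet> v + 2 * t * c + t * t * K"
    unfolding power2_norm_eq_inner c_def K_def
    by (simp add: inner_commute algebra_simps)
  moreover have "t * (t * K) \<le> t * (-c)" using mult_left_mono[OF tK] t0 by simp
  ultimately have "0 \<le> t * c" by (simp add: algebra_simps)
  with mult_pos_neg[OF t0 c] show False by simp
qed

lemma eventually_at_right_Min_range_gt:
  fixes \<phi> :: "'i::finite \<Rightarrow> real \<Rightarrow> real"
  assumes deriv: "\<And>i. (\<phi> i has_real_derivative \<phi>' i) (at 0)"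
    and active_pos: "\<And>i. \<phi> i 0 = Min (range (\<lambda>j. \<phi> j 0)) \<Longrightarrow> \<phi>' i > 0"
  shows "eventually (\<lambda>t. Min (range (\<lambda>i. \<phi> i t)) > Min (range (\<lambda>i. \<phi> i 0))) (at_right 0)"
proof -
  define m where "m = Min (range (\<lambda>j. \<phi> j 0))"
  have "eventually (\<lambda>t. \<phi> i t > m) (at_right 0)" for i
  proof (cases "\<phi> i 0 = m")
    case True
    then have "\<phi>' i > 0" using active_pos unfolding m_def by blast
    then obtain e where "e > 0" "\<forall>h>0. h < e \<longrightarrow> \<phi> i 0 < \<phi> i (0 + h)"
      using DERIV_pos_inc_right[OF deriv] by blast
    then show ?thesis using True unfolding eventually_at_right_field by auto
  next
    case False
    have "m \<le> \<phi> i 0" unfolding m_def by (rule Min_le) auto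
    with False have "\<phi> i 0 > m" by simp
    moreover have "(\<phi> i \<longlongrightarrow> \<phi> i 0) (at_right 0)"
      using DERIV_isCont[OF deriv] by (simp add: isCont_def filterlim_at_split)
    ultimately show ?thesis by (rule order_tendstoD(1)[rotated])
  qed
  then have "eventually (\<lambda>t. \<forall>i. \<phi> i t > m) (at_right 0)"
    by (simp add: eventually_all_finite)
  then show ?thesis unfolding m_def by (auto elim!: eventually_mono)
qed

theorem corollary3:
  fixes T G :: "real^'n \<Rightarrow> real^'n" and S :: "(real^'n) set"
    and u :: "real^'n" and \<alpha> :: "'n \<Rightarrow> real"
  assumes "cont_diff T" and "cont_diff G" and "open S"
    and "\<forall>v\<in>S. \<forall>\<psi>::real^'n. (\<forall>i. \<psi> $ i \<ge> 0) \<and> \<psi> \<noteq> 0 \<longrightarrow> G v \<bullet> \<psi> > 0"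
    and "u \<in> S"
    and "\<forall>i\<in>Nset T G u. \<alpha> i \<ge> 0" and "(\<Sum>i\<in>Nset T G u. \<alpha> i) = 1"
    and "\<forall>\<beta>. (\<forall>i\<in>Nset T G u. \<beta> i \<ge> 0) \<and> (\<Sum>i\<in>Nset T G u. \<beta> i) = 1
              \<longrightarrow> (norm (Acomb T G u \<alpha>))\<^sup>2 \<le> (norm (Acomb T G u \<beta>))\<^sup>2"
    and "norm (Acomb T G u \<alpha>) > 0"
  shows "\<exists>\<tau>0>0. \<forall>\<tau>. 0 < \<tau> \<and> \<tau> < \<tau>0 \<longrightarrow>
           lam T G (u + \<tau> *\<^sub>R (Acomb T G u \<alpha> /\<^sub>R norm (Acomb T G u \<alpha>))) > lam T G u"
proof -
  define v where "v = Acomb T G u \<alpha>"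
  define d where "d = v /\<^sub>R norm v"
  have "T differentiable (at u)" "G differentiable (at u)"
    using assms(1,2) unfolding cont_diff_def differentiable_def by blast+
  moreover have "G u $ i \<noteq> 0" for i
  proof -
    have "G u $ i > 0"
      by (rule vec_nth_pos_if_inner_pos_on_orthant) (use assms(4,5) in blast)
    then show ?thesis by simp
  qed
  ultimately have deriv: "((\<lambda>\<tau>. fval T G i (u + \<tau> *\<^sub>R d)) has_real_derivative
                            grad (fval T G i) u \<bullet> d) (at 0)" for i
    by (intro has_real_derivative_along_line_grad fval_differentiable)
  have active_pos: "grad (fval T G i) u \<bullet> d > 0" if "i \<in> Nset T G u" for i
  proof -
    have "0 < v \<bullet> v" using assms(9) unfolding v_def by simp
    also have "\<dots> \<le> grad (fval T G i) u \<bullet> v"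
      unfolding v_def Acomb_def
      by (rule min_norm_combination_inner_le[OF finite that assms(6,7) assms(8)[unfolded Acomb_def]])
    finally show ?thesis using assms(9) unfolding d_def v_def by simp
  qed
  have "eventually (\<lambda>\<tau>. Min (range (\<lambda>i. fval T G i (u + \<tau> *\<^sub>R d)))
                          > Min (range (\<lambda>i. fval T G i (u + 0 *\<^sub>R d)))) (at_right 0)"
    by (rule eventually_at_right_Min_range_gt[OF deriv])
      (simp add: active_pos Nset_def lam_def)
  then obtain \<tau>0 where "\<tau>0 > 0" "\<forall>\<tau>>0. \<tau> < \<tau>0 \<longrightarrow> lam T G (u + \<tau> *\<^sub>R d) > lam T G u"
    unfolding eventually_at_right_field lam_def by auto
  then show ?thesis unfolding d_def v_def by blast
qed

end
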